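(* In the pure braid group $P_3$, the subgroup $Q_{\{2\}}\cap Q_{\{3\}}$ has infinite index in $Q_{\{2\}}$ and is not finitely generated.
   Context: $P_3$ denotes the pure braid group on $3$ strands, generated by $p_{1,2},p_{1,3},p_{2,3}$ subject to the relations $p_{1,2}p_{1,3}p_{2,3}=p_{1,3}p_{2,3}p_{1,2}=p_{2,3}p_{1,2}p_{1,3}$. For $S\subseteq\{1,2,3\}$, $Q_S$ is the subgroup of $P_3$ generated by the $p_{a,b}$ ($a<b$) with $a\in S$ or $b\in S$; thus $Q_{\{2\}}=\langle p_{1,2},p_{2,3}\rangle$ and $Q_{\{3\}}=\langle p_{1,3},p_{2,3}\rangle$. *)

theory Defs
  imports "HOL-Algebra.Algebra"
begin

datatype pgen = P12 | P13 | P23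

fun pgen_ends :: "pgen \<Rightarrow> nat \<times> nat" where
  "pgen_ends P12 = (1, 2)"
| "pgen_ends P13 = (1, 3)"
| "pgen_ends P23 = (2, 3)"

text \<open>A letter (b, g) stands for g if b = True and for g inverse if b = False.\<close>
type_synonym pword = "(bool \<times> pgen) list"

definition lw :: "pgen list \<Rightarrow> pword" where
  "lw gs = map (\<lambda>g. (True, g)) gs"

inductive_set braid_rel :: "(pword \<times> pword) set" where
  refl: "(w, w) \<in> braid_rel"
| sym: "(u, v) \<in> braid_rel \<Longrightarrow> (v, u) \<in> braid_rel"
| trans: "(u, v) \<in> braid_rel \<Longrightarrow> (v, w) \<in> braid_rel \<Longrightarrow> (u, w) \<in> braid_rel"
| cancel: "(u @ [(b, g), (\<not> b, g)] @ v, u @ v) \<in> braid_rel"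
| rel1: "(u @ lw [P12, P13, P23] @ v, u @ lw [P13, P23, P12] @ v) \<in> braid_rel"
| rel2: "(u @ lw [P13, P23, P12] @ v, u @ lw [P23, P12, P13] @ v) \<in> braid_rel"

definition P3 :: "pword set monoid" where
  "P3 = \<lparr> carrier = UNIV // braid_rel,
          monoid.mult = (\<lambda>A B. braid_rel `` {x @ y | x y. x \<in> A \<and> y \<in> B}),
          monoid.one = braid_rel `` {[]} \<rparr>"

definition pgen_elt :: "pgen \<Rightarrow> pword set" where
  "pgen_elt g = braid_rel `` {[(True, g)]}"

definition Q :: "nat set \<Rightarrow> pword set set" where
  "Q S = generate P3 (pgen_elt ` {g. fst (pgen_ends g) \<in> S \<or> snd (pgen_ends g) \<in> S})"

end

theory Submission
  imports Defs
begin

(* Both properties are detected by homomorphisms out of P3, which the presentation provides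
   (von Dyck). The exponent sum of p12 vanishes on Q3 but not at p12 \<in> Q2, so the powers of
   p12 represent distinct cosets. For finite generation, send p12, p13, p23 to (0, 1),
   (\<delta>0, -1), (-\<delta>1, 0) in the wreath product Z wr Z of pairs (f, s) with f : Z \<Rightarrow> Z.
   On Q2 \<inter> Q3 the translation part s is the exponent sum of p12, hence zero, and every f is
   zero far to the right, so a finitely generated subgroup of Q2 \<inter> Q3 maps into the
   functions vanishing above one fixed N. But p12^n p23 p12^-n lies in Q2 \<inter> Q3 and maps to
   -\<delta>(n+1): it lies in Q3 because p12 = (p13 p23)^-1 c with c = p13 p23 p12 central, so
   conjugation by p12 preserves Q3. *)

section \<open>Generated subgroups and cosets\<close>

context group
begin

lemma hom_eq_on_generate:
  assumes "group K" "\<phi> \<in> hom G K" "\<psi> \<in> hom G K" "A \<subseteq> carrier G"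
    and "\<And>a. a \<in> A \<Longrightarrow> \<phi> a = \<psi> a" and "x \<in> generate G A"
  shows "\<phi> x = \<psi> x"
proof -
  interpret \<phi>: group_hom G K \<phi>
    using assms(1,2) by (simp add: group_hom_def group_hom_axioms_def)
  interpret \<psi>: group_hom G K \<psi>
    using assms(1,3) by (simp add: group_hom_def group_hom_axioms_def)
  from assms(6) show ?thesis
  proof (induction rule: generate.induct)
    case (inv h)
    with assms(4,5) show ?case by auto
  next
    case (eng h h')
    with assms(4) show ?case by (simp add: generate_in_carrier)
  qed (use assms(5) in auto)
qed

lemma commutes_with_generate:
  assumes "c \<in> carrier G" "A \<subseteq> carrier G" "\<And>a. a \<in> A \<Longrightarrow> c \<otimes> a = a \<otimes> c"
    and "x \<in> generate G A"
  shows "c \<otimes> x = x \<otimes> c"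
  using assms(4)
proof (induction rule: generate.induct)
  case (inv a)
  with assms(1,2) have a: "a \<in> carrier G" by auto
  have "c \<otimes> inv a = inv a \<otimes> (a \<otimes> c) \<otimes> inv a"
    using assms(1) a by (simp add: m_assoc flip: m_assoc[of "inv a"])
  also have "\<dots> = inv a \<otimes> (c \<otimes> a) \<otimes> inv a"
    using assms(3) inv by simp
  also have "\<dots> = inv a \<otimes> c"
    using assms(1) a by (simp add: m_assoc)
  finally show ?case .
next
  case (eng x y)
  with assms(2) have "x \<in> carrier G" "y \<in> carrier G"
    by (auto simp: generate_in_carrier)
  with assms(1) have "c \<otimes> (x \<otimes> y) = (c \<otimes> x) \<otimes> y"
    by (simp add: m_assoc)
  also have "\<dots> = x \<otimes> (c \<otimes> y)"
    using eng.IH assms(1) \<open>x \<in> carrier G\<close> \<open>y \<in> carrier G\<close> by (simp add: m_assoc)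
  also have "\<dots> = x \<otimes> y \<otimes> c"
    using eng.IH assms(1) \<open>x \<in> carrier G\<close> \<open>y \<in> carrier G\<close> by (simp add: m_assoc)
  finally show ?case .
qed (use assms in auto)

lemma conj_central_factor:
  assumes "k \<in> carrier G" "c \<in> carrier G" "x \<in> carrier G"
    and "\<And>y. y \<in> carrier G \<Longrightarrow> c \<otimes> y = y \<otimes> c"
  shows "k \<otimes> c \<otimes> x \<otimes> inv (k \<otimes> c) = k \<otimes> x \<otimes> inv k"
proof -
  have "k \<otimes> c \<otimes> x \<otimes> inv (k \<otimes> c) = k \<otimes> (c \<otimes> x) \<otimes> inv c \<otimes> inv k"
    using assms(1-3) by (simp add: inv_mult_group m_assoc)
  also have "\<dots> = k \<otimes> x \<otimes> inv k"
    using assms by (simp add: m_assoc)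
  finally show ?thesis .
qed

lemma infinite_rcosets_if_hom_integer_group:
  assumes "subgroup H G" "subgroup K G" "\<phi> \<in> hom G integer_group"
    and "\<And>h. h \<in> H \<Longrightarrow> \<phi> h = 0" and "x \<in> K" "\<phi> x \<noteq> 0"
  shows "infinite (rcosets\<^bsub>G\<lparr>carrier := K\<rparr>\<^esub> H)"
proof
  assume fin: "finite (rcosets\<^bsub>G\<lparr>carrier := K\<rparr>\<^esub> H)"
  have x: "x \<in> carrier G"
    using assms(2,5) subgroup.subset by blast
  have "inj (\<lambda>n::int. H #> x [^] n)"
  proof (rule injI)
    fix m n :: int
    assume "H #> x [^] m = H #> x [^] n"
    then have "x [^] m \<in> H #> x [^] n"
      using repr_independenceD[OF assms(1), of "x [^] m" "x [^] n"] x by simp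
    then obtain h where h: "h \<in> H" "x [^] m = h \<otimes> x [^] n"
      unfolding r_coset_def by blast
    with assms(1) have "h \<in> carrier G"
      by (simp add: subgroup.mem_carrier)
    with h x have "\<phi> (x [^] m) = \<phi> h + \<phi> (x [^] n)"
      using hom_mult[OF assms(3)] by simp
    then have "m * \<phi> x = n * \<phi> x"
      using hom_int_pow[OF assms(3) x is_group group_integer_group] assms(4) h(1) by simp
    with assms(6) show "m = n" by simp
  qed
  moreover have "range (\<lambda>n::int. H #> x [^] n) \<subseteq> rcosets\<^bsub>G\<lparr>carrier := K\<rparr>\<^esub> H"
    using subgroup_int_pow_closed[OF assms(2,5)] unfolding RCOSETS_def r_coset_def by auto
  ultimately show False
    using fin by (meson finite_imageD finite_subset infinite_UNIV_int)
qed

lemma not_finitely_generated_if_ascending_union: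
  fixes S :: "nat \<Rightarrow> 'a set"
  assumes "\<And>n. subgroup (S n) G" "mono S" "H \<subseteq> (\<Union>n. S n)" "\<And>n. \<not> H \<subseteq> S n"
  shows "\<not> (\<exists>F. finite F \<and> F \<subseteq> H \<and> generate G F = H)"
proof
  assume "\<exists>F. finite F \<and> F \<subseteq> H \<and> generate G F = H"
  then obtain F where F: "finite F" "F \<subseteq> H" "generate G F = H"
    by blast
  have "S i \<subseteq> S j \<or> S j \<subseteq> S i" for i j
    using assms(2) by (meson monoD nle_le)
  then have chain: "subset.chain UNIV (range S)"
    by (simp add: subset_chain_def)
  have "F \<subseteq> \<Union> (range S)"
    using F(2) assms(3) by blast
  then obtain B where "B \<in> range S" "F \<subseteq> B"
    using finite_subset_Union_chain[OF F(1) _ _ chain] by blast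
  then obtain n where "F \<subseteq> S n"
    by blast
  then have "H \<subseteq> S n"
    unfolding F(3)[symmetric] by (rule generate_subgroup_incl[OF _ assms(1)])
  with assms(4) show False by blast
qed

end

section \<open>The presented group P3\<close>

definition word_class :: "pword \<Rightarrow> pword set" where
  "word_class w = braid_rel `` {w}"

definition word_inv :: "pword \<Rightarrow> pword" where
  "word_inv w = rev (map (\<lambda>(b, g). (\<not> b, g)) w)"

lemma equiv_braid_rel: "equiv UNIV braid_rel"
  unfolding equiv_def refl_on_def sym_def trans_def
  by (auto intro: braid_rel.intros)

lemma braid_rel_append_left: "(u, v) \<in> braid_rel \<Longrightarrow> (x @ u, x @ v) \<in> braid_rel"
proof (induction rule: braid_rel.induct)
  case (cancel u b g v)
  then show ?case using braid_rel.cancel[of "x @ u" b g v] by simp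
next
  case (rel1 u v)
  then show ?case using braid_rel.rel1[of "x @ u" v] by simp
next
  case (rel2 u v)
  then show ?case using braid_rel.rel2[of "x @ u" v] by simp
qed (auto intro: braid_rel.intros)

lemma braid_rel_append_right: "(u, v) \<in> braid_rel \<Longrightarrow> (u @ y, v @ y) \<in> braid_rel"
proof (induction rule: braid_rel.induct)
  case (cancel u b g v)
  then show ?case using braid_rel.cancel[of u b g "v @ y"] by simp
next
  case (rel1 u v)
  then show ?case using braid_rel.rel1[of u "v @ y"] by simp
next
  case (rel2 u v)
  then show ?case using braid_rel.rel2[of u "v @ y"] by simp
qed (auto intro: braid_rel.intros)

lemma braid_rel_append:
  "(u, v) \<in> braid_rel \<Longrightarrow> (x, y) \<in> braid_rel \<Longrightarrow> (u @ x, v @ y) \<in> braid_rel"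
  by (meson braid_rel_append_left braid_rel_append_right braid_rel.trans)

lemma word_inv_append_cancel: "(word_inv w @ w, []) \<in> braid_rel"
proof (induction w)
  case Nil
  then show ?case by (simp add: word_inv_def braid_rel.refl)
next
  case (Cons x w)
  obtain b g where x: "x = (b, g)" by force
  have "(word_inv w @ [(\<not> b, g), (\<not> \<not> b, g)] @ w, word_inv w @ w) \<in> braid_rel"
    by (rule braid_rel.cancel)
  with Cons x show ?case by (auto simp: word_inv_def intro: braid_rel.trans)
qed

lemma word_class_eq_iff: "word_class u = word_class v \<longleftrightarrow> (u, v) \<in> braid_rel"
  unfolding word_class_def using equiv_braid_rel by (simp add: equiv_class_eq_iff)

lemma mem_word_class: "x \<in> word_class w \<longleftrightarrow> (w, x) \<in> braid_rel"
  unfolding word_class_def by simp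

lemma word_class_self: "w \<in> word_class w"
  by (simp add: mem_word_class braid_rel.refl)

lemma carrier_P3: "carrier P3 = range word_class"
  unfolding P3_def word_class_def quotient_def by auto

lemma one_P3: "\<one>\<^bsub>P3\<^esub> = word_class []"
  unfolding P3_def word_class_def by simp

lemma mult_P3: "word_class u \<otimes>\<^bsub>P3\<^esub> word_class v = word_class (u @ v)"
proof -
  have "braid_rel `` {x @ y |x y. x \<in> word_class u \<and> y \<in> word_class v} = word_class (u @ v)"
  proof (intro equalityI subsetI)
    fix x
    assume "x \<in> word_class (u @ v)"
    moreover have "u @ v \<in> {x @ y |x y. x \<in> word_class u \<and> y \<in> word_class v}"
      by (auto simp: mem_word_class intro: braid_rel.refl)
    ultimately show "x \<in> braid_rel `` {x @ y |x y. x \<in> word_class u \<and> y \<in> word_class v}"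
      by (auto simp: mem_word_class)
  qed (auto simp: mem_word_class intro: braid_rel.trans braid_rel_append)
  then show ?thesis unfolding P3_def by simp
qed

lemma group_P3: "group P3"
proof (rule groupI)
  fix x
  assume "x \<in> carrier P3"
  then obtain w where "x = word_class w" by (auto simp: carrier_P3)
  then show "\<exists>y\<in>carrier P3. y \<otimes>\<^bsub>P3\<^esub> x = \<one>\<^bsub>P3\<^esub>"
    using word_inv_append_cancel[of w]
    by (auto simp: carrier_P3 mult_P3 one_P3 word_class_eq_iff)
qed (auto simp: carrier_P3 mult_P3 one_P3)

interpretation P3: group P3
  by (rule group_P3)

lemma word_class_in_carrier [simp]: "word_class w \<in> carrier P3"
  by (simp add: carrier_P3)

lemma inv_P3: "inv\<^bsub>P3\<^esub> (word_class w) = word_class (word_inv w)"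
  by (rule P3.inv_equality) (auto simp: mult_P3 one_P3 word_class_eq_iff word_inv_append_cancel)

lemma pgen_elt_eq: "pgen_elt g = word_class [(True, g)]"
  by (simp add: pgen_elt_def word_class_def)

lemma pgen_elt_in_carrier [simp]: "pgen_elt g \<in> carrier P3"
  by (simp add: pgen_elt_eq)

lemma inv_pgen_elt: "inv\<^bsub>P3\<^esub> (pgen_elt g) = word_class [(False, g)]"
  by (simp add: pgen_elt_eq inv_P3 word_inv_def)

lemma word_class_in_generate:
  assumes "snd ` set w \<subseteq> Gs"
  shows "word_class w \<in> generate P3 (pgen_elt ` Gs)"
  using assms
proof (induction w)
  case Nil
  then show ?case by (simp add: generate.one flip: one_P3)
next
  case (Cons x w)
  obtain b g where x: "x = (b, g)" by force
  with Cons.prems have "pgen_elt g \<in> pgen_elt ` Gs" by simp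
  then have "pgen_elt g \<in> generate P3 (pgen_elt ` Gs)"
    and "inv\<^bsub>P3\<^esub> (pgen_elt g) \<in> generate P3 (pgen_elt ` Gs)"
    by (auto intro: generate.incl generate.inv)
  then have "word_class [x] \<in> generate P3 (pgen_elt ` Gs)"
    by (cases b) (simp_all add: x flip: pgen_elt_eq inv_pgen_elt)
  with Cons have "word_class [x] \<otimes>\<^bsub>P3\<^esub> word_class w \<in> generate P3 (pgen_elt ` Gs)"
    by (auto intro: generate.eng)
  then show ?case by (simp add: mult_P3)
qed

lemma P3_generated: "generate P3 (range pgen_elt) = carrier P3"
proof
  show "generate P3 (range pgen_elt) \<subseteq> carrier P3"
    by (rule P3.generate_incl) auto
  show "carrier P3 \<subseteq> generate P3 (range pgen_elt)"
    using word_class_in_generate[of _ UNIV] by (auto simp: carrier_P3)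
qed

lemma Q_2: "Q {2} = generate P3 (pgen_elt ` {P12, P23})"
proof -
  have "fst (pgen_ends g) \<in> {2} \<or> snd (pgen_ends g) \<in> {2} \<longleftrightarrow> g \<in> {P12, P23}" for g
    by (cases g) auto
  then have "{g. fst (pgen_ends g) \<in> {2} \<or> snd (pgen_ends g) \<in> {2}} = {P12, P23}"
    by blast
  then show ?thesis by (simp only: Q_def)
qed

lemma Q_3: "Q {3} = generate P3 (pgen_elt ` {P13, P23})"
proof -
  have "fst (pgen_ends g) \<in> {3} \<or> snd (pgen_ends g) \<in> {3} \<longleftrightarrow> g \<in> {P13, P23}" for g
    by (cases g) auto
  then have "{g. fst (pgen_ends g) \<in> {3} \<or> snd (pgen_ends g) \<in> {3}} = {P13, P23}"
    by blast
  then show ?thesis by (simp only: Q_def)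
qed

lemma subgroup_generate_pgen_elt: "subgroup (generate P3 (pgen_elt ` Gs)) P3"
  by (rule P3.generate_is_subgroup) auto

lemma subgroup_Q_2: "subgroup (Q {2}) P3" and subgroup_Q_3: "subgroup (Q {3}) P3"
  unfolding Q_2 Q_3 by (rule subgroup_generate_pgen_elt)+

section \<open>Homomorphisms out of P3\<close>

fun eval_word :: "('g, 'm) monoid_scheme \<Rightarrow> (pgen \<Rightarrow> 'g) \<Rightarrow> pword \<Rightarrow> 'g" where
  "eval_word G a [] = \<one>\<^bsub>G\<^esub>"
| "eval_word G a ((b, g) # w) = (if b then a g else inv\<^bsub>G\<^esub> a g) \<otimes>\<^bsub>G\<^esub> eval_word G a w"

definition P3_hom :: "('g, 'm) monoid_scheme \<Rightarrow> (pgen \<Rightarrow> 'g) \<Rightarrow> pword set \<Rightarrow> 'g" where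
  "P3_hom G a x = the_elem (eval_word G a ` x)"

locale P3_rep = group G for G (structure) +
  fixes a :: "pgen \<Rightarrow> 'a"
  assumes gen_closed [simp]: "a g \<in> carrier G"
    and relator1: "a P12 \<otimes> a P13 \<otimes> a P23 = a P13 \<otimes> a P23 \<otimes> a P12"
    and relator2: "a P13 \<otimes> a P23 \<otimes> a P12 = a P23 \<otimes> a P12 \<otimes> a P13"
begin

lemma eval_word_closed [simp]: "eval_word G a w \<in> carrier G"
  by (induction w) auto

lemma eval_word_append: "eval_word G a (u @ v) = eval_word G a u \<otimes> eval_word G a v"
  by (induction u) (auto simp: m_assoc)

lemma eval_word_braid_rel: "(u, v) \<in> braid_rel \<Longrightarrow> eval_word G a u = eval_word G a v"
proof (induction rule: braid_rel.induct)
  case (cancel u b g v)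
  have "eval_word G a [(b, g), (\<not> b, g)] = \<one>"
    by (cases b) auto
  then show ?case
    by (simp only: eval_word_append) simp
next
  case (rel1 u v)
  have "eval_word G a (lw [P12, P13, P23]) = eval_word G a (lw [P13, P23, P12])"
    using relator1 by (simp add: lw_def m_assoc)
  then show ?case
    by (simp only: eval_word_append)
next
  case (rel2 u v)
  have "eval_word G a (lw [P13, P23, P12]) = eval_word G a (lw [P23, P12, P13])"
    using relator2 by (simp add: lw_def m_assoc)
  then show ?case
    by (simp only: eval_word_append)
qed simp_all

lemma P3_hom_word_class [simp]: "P3_hom G a (word_class w) = eval_word G a w"
  unfolding P3_hom_def using word_class_self[of w]
  by (intro the_elem_image_unique) (auto simp: mem_word_class intro: eval_word_braid_rel[symmetric])

lemma P3_hom_pgen_elt [simp]: "P3_hom G a (pgen_elt g) = a g"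
  by (simp add: pgen_elt_eq)

lemma P3_hom_hom: "P3_hom G a \<in> hom P3 G"
  by (rule homI) (auto simp: carrier_P3 mult_P3 eval_word_append)

lemma group_hom_P3_hom: "group_hom P3 G (P3_hom G a)"
  by (simp add: group_hom_def group_hom_axioms_def P3_hom_hom group_P3 is_group)

lemma full_twist_commutes:
  "a P13 \<otimes> a P23 \<otimes> a P12 \<otimes> a g = a g \<otimes> (a P13 \<otimes> a P23 \<otimes> a P12)"
proof (cases g)
  case P12
  have "a P12 \<otimes> (a P13 \<otimes> a P23 \<otimes> a P12) = a P12 \<otimes> a P13 \<otimes> a P23 \<otimes> a P12"
    by (simp add: m_assoc)
  with P12 relator1 show ?thesis by simp
next
  case P13
  have "a P13 \<otimes> (a P23 \<otimes> a P12 \<otimes> a P13) = a P13 \<otimes> a P23 \<otimes> a P12 \<otimes> a P13"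
    by (simp add: m_assoc)
  with P13 relator2[symmetric] show ?thesis by simp
next
  case P23
  have "a P23 \<otimes> (a P12 \<otimes> a P13 \<otimes> a P23) = a P23 \<otimes> a P12 \<otimes> a P13 \<otimes> a P23"
    by (simp add: m_assoc)
  with P23 relator1 relator2[symmetric] show ?thesis by simp
qed

end

lemma P3_rep_pgen_elt: "P3_rep P3 pgen_elt"
proof (intro P3_rep.intro group_P3 P3_rep_axioms.intro)
  have "pgen_elt x \<otimes>\<^bsub>P3\<^esub> pgen_elt y \<otimes>\<^bsub>P3\<^esub> pgen_elt z = word_class (lw [x, y, z])" for x y z
    by (simp add: pgen_elt_eq mult_P3 lw_def)
  then show "pgen_elt P12 \<otimes>\<^bsub>P3\<^esub> pgen_elt P13 \<otimes>\<^bsub>P3\<^esub> pgen_elt P23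
      = pgen_elt P13 \<otimes>\<^bsub>P3\<^esub> pgen_elt P23 \<otimes>\<^bsub>P3\<^esub> pgen_elt P12"
    and "pgen_elt P13 \<otimes>\<^bsub>P3\<^esub> pgen_elt P23 \<otimes>\<^bsub>P3\<^esub> pgen_elt P12
      = pgen_elt P23 \<otimes>\<^bsub>P3\<^esub> pgen_elt P12 \<otimes>\<^bsub>P3\<^esub> pgen_elt P13"
    using braid_rel.rel1[of "[]" "[]"] braid_rel.rel2[of "[]" "[]"]
    by (simp_all add: word_class_eq_iff)
qed simp

section \<open>Conjugation by p12 preserves Q3\<close>

lemma full_twist_central:
  assumes "x \<in> carrier P3"
  shows "pgen_elt P13 \<otimes>\<^bsub>P3\<^esub> pgen_elt P23 \<otimes>\<^bsub>P3\<^esub> pgen_elt P12 \<otimes>\<^bsub>P3\<^esub> x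
       = x \<otimes>\<^bsub>P3\<^esub> (pgen_elt P13 \<otimes>\<^bsub>P3\<^esub> pgen_elt P23 \<otimes>\<^bsub>P3\<^esub> pgen_elt P12)"
  by (rule P3.commutes_with_generate[of _ "range pgen_elt"])
    (use assms P3_rep.full_twist_commutes[OF P3_rep_pgen_elt] in \<open>auto simp: P3_generated\<close>)

lemma conj_P12_Q_3:
  assumes "y \<in> Q {3}"
  shows "pgen_elt P12 \<otimes>\<^bsub>P3\<^esub> y \<otimes>\<^bsub>P3\<^esub> inv\<^bsub>P3\<^esub> (pgen_elt P12) \<in> Q {3}"
proof -
  define k where "k = inv\<^bsub>P3\<^esub> (pgen_elt P13 \<otimes>\<^bsub>P3\<^esub> pgen_elt P23)"
  define c where "c = pgen_elt P13 \<otimes>\<^bsub>P3\<^esub> pgen_elt P23 \<otimes>\<^bsub>P3\<^esub> pgen_elt P12"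
  have k: "k \<in> Q {3}"
    unfolding k_def Q_3
    by (intro subgroup.m_inv_closed subgroup.m_closed subgroup_generate_pgen_elt generate.incl) auto
  have carrier: "k \<in> carrier P3" "c \<in> carrier P3" "y \<in> carrier P3"
    using assms subgroup.subset[OF subgroup_Q_3] by (auto simp: k_def c_def)
  have central: "c \<otimes>\<^bsub>P3\<^esub> z = z \<otimes>\<^bsub>P3\<^esub> c" if "z \<in> carrier P3" for z
    using full_twist_central[OF that] unfolding c_def .
  have "k \<otimes>\<^bsub>P3\<^esub> c = k \<otimes>\<^bsub>P3\<^esub> (pgen_elt P13 \<otimes>\<^bsub>P3\<^esub> pgen_elt P23) \<otimes>\<^bsub>P3\<^esub> pgen_elt P12"
    unfolding c_def using carrier(1) by (simp add: P3.m_assoc)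
  also have "\<dots> = pgen_elt P12"
    unfolding k_def by simp
  finally have "pgen_elt P12 \<otimes>\<^bsub>P3\<^esub> y \<otimes>\<^bsub>P3\<^esub> inv\<^bsub>P3\<^esub> (pgen_elt P12)
      = k \<otimes>\<^bsub>P3\<^esub> c \<otimes>\<^bsub>P3\<^esub> y \<otimes>\<^bsub>P3\<^esub> inv\<^bsub>P3\<^esub> (k \<otimes>\<^bsub>P3\<^esub> c)"
    by simp
  also have "\<dots> = k \<otimes>\<^bsub>P3\<^esub> y \<otimes>\<^bsub>P3\<^esub> inv\<^bsub>P3\<^esub> k"
    by (rule P3.conj_central_factor[OF carrier central])
  also have "\<dots> \<in> Q {3}"
    using subgroup_Q_3 k assms by (intro subgroup.m_inv_closed subgroup.m_closed)
  finally show ?thesis .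
qed

lemma conj_pow_P12_Q_3:
  fixes n :: nat
  assumes "y \<in> Q {3}"
  shows "pgen_elt P12 [^]\<^bsub>P3\<^esub> n \<otimes>\<^bsub>P3\<^esub> y \<otimes>\<^bsub>P3\<^esub> inv\<^bsub>P3\<^esub> (pgen_elt P12 [^]\<^bsub>P3\<^esub> n) \<in> Q {3}"
  using assms
proof (induction n arbitrary: y)
  case 0
  then show ?case
    using subgroup.subset[OF subgroup_Q_3] by auto
next
  case (Suc n)
  have y: "y \<in> carrier P3"
    using Suc.prems subgroup.subset[OF subgroup_Q_3] by blast
  have "pgen_elt P12 [^]\<^bsub>P3\<^esub> Suc n \<otimes>\<^bsub>P3\<^esub> y \<otimes>\<^bsub>P3\<^esub> inv\<^bsub>P3\<^esub> (pgen_elt P12 [^]\<^bsub>P3\<^esub> Suc n)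
      = pgen_elt P12 [^]\<^bsub>P3\<^esub> n
          \<otimes>\<^bsub>P3\<^esub> (pgen_elt P12 \<otimes>\<^bsub>P3\<^esub> y \<otimes>\<^bsub>P3\<^esub> inv\<^bsub>P3\<^esub> (pgen_elt P12))
          \<otimes>\<^bsub>P3\<^esub> inv\<^bsub>P3\<^esub> (pgen_elt P12 [^]\<^bsub>P3\<^esub> n)"
    using y by (simp add: P3.nat_pow_Suc P3.inv_mult_group P3.m_assoc)
  also have "\<dots> \<in> Q {3}"
    by (rule Suc.IH[OF conj_P12_Q_3[OF Suc.prems]])
  finally show ?case .
qed

lemma conj_pow_P12_P23_mem:
  fixes n :: nat
  shows "pgen_elt P12 [^]\<^bsub>P3\<^esub> n \<otimes>\<^bsub>P3\<^esub> pgen_elt P23 \<otimes>\<^bsub>P3\<^esub> inv\<^bsub>P3\<^esub> (pgen_elt P12 [^]\<^bsub>P3\<^esub> n)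
     \<in> Q {2} \<inter> Q {3}"
proof
  have "pgen_elt P12 [^]\<^bsub>P3\<^esub> n \<in> Q {2}"
    using P3.subgroup_int_pow_closed[OF subgroup_Q_2, of _ "int n"]
    by (simp add: Q_2 int_pow_int generate.incl)
  then show "pgen_elt P12 [^]\<^bsub>P3\<^esub> n \<otimes>\<^bsub>P3\<^esub> pgen_elt P23 \<otimes>\<^bsub>P3\<^esub> inv\<^bsub>P3\<^esub> (pgen_elt P12 [^]\<^bsub>P3\<^esub> n)
      \<in> Q {2}"
    using subgroup_Q_2
    by (intro subgroup.m_closed subgroup.m_inv_closed) (auto simp: Q_2 intro: generate.incl)
  show "pgen_elt P12 [^]\<^bsub>P3\<^esub> n \<otimes>\<^bsub>P3\<^esub> pgen_elt P23 \<otimes>\<^bsub>P3\<^esub> inv\<^bsub>P3\<^esub> (pgen_elt P12 [^]\<^bsub>P3\<^esub> n)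
      \<in> Q {3}"
    by (rule conj_pow_P12_Q_3) (auto simp: Q_3 intro: generate.incl)
qed

section \<open>Exponent sums and the index of Q2 \<inter> Q3 in Q2\<close>

definition exponent_sum :: "pgen \<Rightarrow> pword set \<Rightarrow> int" where
  "exponent_sum g = P3_hom integer_group (\<lambda>h. of_bool (h = g))"

lemma P3_rep_exponent_sum: "P3_rep integer_group (\<lambda>h. of_bool (h = g))"
  by (intro P3_rep.intro group_integer_group P3_rep_axioms.intro) auto

lemma exponent_sum_hom: "exponent_sum g \<in> hom P3 integer_group"
  unfolding exponent_sum_def by (rule P3_rep.P3_hom_hom[OF P3_rep_exponent_sum])

lemma exponent_sum_pgen_elt: "exponent_sum g (pgen_elt h) = of_bool (h = g)"
  unfolding exponent_sum_def by (rule P3_rep.P3_hom_pgen_elt[OF P3_rep_exponent_sum])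

lemma exponent_sum_generate:
  assumes "g \<notin> Gs" "x \<in> generate P3 (pgen_elt ` Gs)"
  shows "exponent_sum g x = 0"
proof -
  have zero_hom: "(\<lambda>_. 0) \<in> hom P3 integer_group"
    by (rule homI) auto
  show ?thesis
    by (rule P3.hom_eq_on_generate[OF group_integer_group exponent_sum_hom zero_hom _ _ assms(2)])
      (use assms(1) in \<open>auto simp: exponent_sum_pgen_elt\<close>)
qed

lemma Q_2_Q_3_infinite_index: "infinite (rcosets\<^bsub>P3\<lparr>carrier := Q {2}\<rparr>\<^esub> (Q {2} \<inter> Q {3}))"
proof (rule P3.infinite_rcosets_if_hom_integer_group)
  show "exponent_sum P12 h = 0" if "h \<in> Q {2} \<inter> Q {3}" for h
    using that exponent_sum_generate[of P12 "{P13, P23}"] by (auto simp: Q_3)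
  show "pgen_elt P12 \<in> Q {2}"
    by (auto simp: Q_2 intro: generate.incl)
qed (simp_all add: subgroup_Q_2 subgroup_Q_3 P3.subgroups_Inter_pair exponent_sum_hom exponent_sum_pgen_elt)

section \<open>A representation in Z wr Z\<close>

text \<open>The unrestricted wreath product Z wr Z: Z acts on Z^Z by translation.\<close>

definition wreath :: "((int \<Rightarrow> int) \<times> int) monoid" where
  "wreath = \<lparr>carrier = UNIV, monoid.mult = (\<lambda>(f, s) (g, t). (\<lambda>k. f k + g (k - s), s + t)),
     one = (\<lambda>_. 0, 0)\<rparr>"

lemma carrier_wreath [simp]: "carrier wreath = UNIV"
  and mult_wreath [simp]: "(f, s) \<otimes>\<^bsub>wreath\<^esub> (g, t) = (\<lambda>k. f k + g (k - s), s + t)"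
  and one_wreath [simp]: "\<one>\<^bsub>wreath\<^esub> = (\<lambda>_. 0, 0)"
  by (simp_all add: wreath_def)

lemma group_wreath: "group wreath"
proof (rule groupI)
  fix x y z :: "(int \<Rightarrow> int) \<times> int"
  show "x \<otimes>\<^bsub>wreath\<^esub> y \<otimes>\<^bsub>wreath\<^esub> z = x \<otimes>\<^bsub>wreath\<^esub> (y \<otimes>\<^bsub>wreath\<^esub> z)"
    by (cases x; cases y; cases z) (simp add: algebra_simps)
  obtain f s where "x = (f, s)" by force
  then show "\<exists>y\<in>carrier wreath. y \<otimes>\<^bsub>wreath\<^esub> x = \<one>\<^bsub>wreath\<^esub>"
    by (intro bexI[of _ "(\<lambda>k. - f (k + s), - s)"]) auto
qed auto

interpretation wreath: group wreath
  by (rule group_wreath)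

lemma inv_wreath [simp]: "inv\<^bsub>wreath\<^esub> (f, s) = (\<lambda>k. - f (k + s), - s)"
  by (rule wreath.inv_equality) auto

lemma wreath_nat_pow: "(\<lambda>_. 0, s) [^]\<^bsub>wreath\<^esub> n = (\<lambda>_. 0, int n * s)"
  by (induction n) (simp_all add: algebra_simps)

definition support_bounded_above :: "((int \<Rightarrow> int) \<times> int) set" where
  "support_bounded_above = {(f, s). \<exists>N. \<forall>k>N. f k = 0}"

definition base_vanishing_above :: "nat \<Rightarrow> ((int \<Rightarrow> int) \<times> int) set" where
  "base_vanishing_above n = {(f, 0) | f. \<forall>k>int n. f k = 0}"

lemma subgroup_support_bounded_above: "subgroup support_bounded_above wreath"
proof (rule wreath.subgroupI)
  show "support_bounded_above \<noteq> {}"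
    by (auto simp: support_bounded_above_def)
next
  fix x
  assume "x \<in> support_bounded_above"
  then obtain f s N where "x = (f, s)" "\<forall>k>N. f k = 0"
    by (auto simp: support_bounded_above_def)
  then show "inv\<^bsub>wreath\<^esub> x \<in> support_bounded_above"
    by (auto simp: support_bounded_above_def intro!: exI[of _ "N - s"])
next
  fix x y
  assume "x \<in> support_bounded_above" "y \<in> support_bounded_above"
  then obtain f s g t N M where "x = (f, s)" "\<forall>k>N. f k = 0" "y = (g, t)" "\<forall>k>M. g k = 0"
    by (auto simp: support_bounded_above_def)
  then show "x \<otimes>\<^bsub>wreath\<^esub> y \<in> support_bounded_above"
    by (auto simp: support_bounded_above_def intro!: exI[of _ "max N (M + s)"])
qed simp

lemma subgroup_base_vanishing_above: "subgroup (base_vanishing_above n) wreath"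
  by (rule wreath.subgroupI) (auto simp: base_vanishing_above_def)

lemma mono_base_vanishing_above: "mono base_vanishing_above"
  by (rule monoI) (auto simp: base_vanishing_above_def)

fun wreath_gen :: "pgen \<Rightarrow> (int \<Rightarrow> int) \<times> int" where
  "wreath_gen P12 = (\<lambda>_. 0, 1)"
| "wreath_gen P13 = (\<lambda>k. of_bool (k = 0), -1)"
| "wreath_gen P23 = (\<lambda>k. - of_bool (k = 1), 0)"

lemma P3_rep_wreath_gen: "P3_rep wreath wreath_gen"
  by (intro P3_rep.intro group_wreath P3_rep_axioms.intro) (auto simp: fun_eq_iff)

definition wreath_rep :: "pword set \<Rightarrow> (int \<Rightarrow> int) \<times> int" where
  "wreath_rep = P3_hom wreath wreath_gen"

lemma group_hom_wreath_rep: "group_hom P3 wreath wreath_rep"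
  unfolding wreath_rep_def by (rule P3_rep.group_hom_P3_hom[OF P3_rep_wreath_gen])

lemma wreath_rep_pgen_elt [simp]: "wreath_rep (pgen_elt g) = wreath_gen g"
  unfolding wreath_rep_def by (rule P3_rep.P3_hom_pgen_elt[OF P3_rep_wreath_gen])

lemma wreath_rep_support_bounded_above:
  assumes "x \<in> carrier P3"
  shows "wreath_rep x \<in> support_bounded_above"
proof -
  interpret group_hom P3 wreath wreath_rep
    by (rule group_hom_wreath_rep)
  have "range wreath_gen \<subseteq> support_bounded_above"
  proof
    fix y
    assume "y \<in> range wreath_gen"
    then obtain g where "y = wreath_gen g" by blast
    then show "y \<in> support_bounded_above"
      by (cases g) (auto simp: support_bounded_above_def intro!: exI[of _ 1])
  qed
  then have "generate wreath (wreath_rep ` range pgen_elt) \<subseteq> support_bounded_above"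
    using wreath.generate_subgroup_incl[OF _ subgroup_support_bounded_above]
    by (simp add: image_image)
  moreover have "generate wreath (wreath_rep ` range pgen_elt) = wreath_rep ` carrier P3"
    by (simp add: generate_img image_subset_iff P3_generated)
  ultimately show ?thesis
    using assms by blast
qed

lemma snd_wreath_rep_Q_2:
  assumes "x \<in> Q {2}"
  shows "snd (wreath_rep x) = exponent_sum P12 x"
proof -
  have "snd \<in> hom wreath integer_group"
  proof (rule homI)
    fix y z :: "(int \<Rightarrow> int) \<times> int"
    show "snd (y \<otimes>\<^bsub>wreath\<^esub> z) = snd y \<otimes>\<^bsub>integer_group\<^esub> snd z"
      by (cases y; cases z) simp
  qed simp
  then have "snd \<circ> wreath_rep \<in> hom P3 integer_group"
    using group_hom_wreath_rep hom_compose by (blast dest: group_hom.homh)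
  then have "(snd \<circ> wreath_rep) x = exponent_sum P12 x"
    by (rule P3.hom_eq_on_generate[OF group_integer_group _ exponent_sum_hom _ _ assms[unfolded Q_2]])
      (auto simp: exponent_sum_pgen_elt)
  then show ?thesis
    by simp
qed

lemma wreath_rep_Q_2_Q_3: "wreath_rep ` (Q {2} \<inter> Q {3}) \<subseteq> (\<Union>n. base_vanishing_above n)"
proof
  fix y
  assume "y \<in> wreath_rep ` (Q {2} \<inter> Q {3})"
  then obtain x where x: "x \<in> Q {2}" "x \<in> Q {3}" "y = wreath_rep x"
    by blast
  have "exponent_sum P12 x = 0"
    using x(2) exponent_sum_generate[of P12 "{P13, P23}"] by (simp add: Q_3)
  then have shift: "snd y = 0"
    using snd_wreath_rep_Q_2[OF x(1)] x(3) by simp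
  have "x \<in> carrier P3"
    using x(1) subgroup.subset[OF subgroup_Q_2] by blast
  then have "y \<in> support_bounded_above"
    using wreath_rep_support_bounded_above x(3) by simp
  then obtain f N where "y = (f, 0)" "\<forall>k>N. f k = 0"
    using shift by (auto simp: support_bounded_above_def)
  then have "y \<in> base_vanishing_above (nat N)"
    by (auto simp: base_vanishing_above_def)
  then show "y \<in> (\<Union>n. base_vanishing_above n)"
    by blast
qed

lemma wreath_rep_conj_pow:
  "wreath_rep (pgen_elt P12 [^]\<^bsub>P3\<^esub> n \<otimes>\<^bsub>P3\<^esub> pgen_elt P23 \<otimes>\<^bsub>P3\<^esub> inv\<^bsub>P3\<^esub> (pgen_elt P12 [^]\<^bsub>P3\<^esub> n))
     = (\<lambda>k. - of_bool (k = int n + 1), 0)"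
proof -
  interpret group_hom P3 wreath wreath_rep
    by (rule group_hom_wreath_rep)
  show ?thesis
    by (simp add: hom_nat_pow wreath_nat_pow fun_eq_iff algebra_simps)
qed

lemma Q_2_Q_3_not_finitely_generated:
  "\<not> (\<exists>F. finite F \<and> F \<subseteq> Q {2} \<inter> Q {3} \<and> generate P3 F = Q {2} \<inter> Q {3})"
proof
  assume "\<exists>F. finite F \<and> F \<subseteq> Q {2} \<inter> Q {3} \<and> generate P3 F = Q {2} \<inter> Q {3}"
  then obtain F where F: "finite F" "F \<subseteq> Q {2} \<inter> Q {3}" "generate P3 F = Q {2} \<inter> Q {3}"
    by blast
  have "F \<subseteq> carrier P3"
    using F(2) subgroup.subset[OF subgroup_Q_2] by blast
  then have "generate wreath (wreath_rep ` F) = wreath_rep ` (Q {2} \<inter> Q {3})"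
    using group_hom.generate_img[OF group_hom_wreath_rep] F(3) by simp
  with F(1,2) have "\<exists>F'. finite F' \<and> F' \<subseteq> wreath_rep ` (Q {2} \<inter> Q {3})
      \<and> generate wreath F' = wreath_rep ` (Q {2} \<inter> Q {3})"
    by blast
  moreover have "\<not> wreath_rep ` (Q {2} \<inter> Q {3}) \<subseteq> base_vanishing_above n" for n
  proof
    assume "wreath_rep ` (Q {2} \<inter> Q {3}) \<subseteq> base_vanishing_above n"
    with conj_pow_P12_P23_mem[of n]
    have "(\<lambda>k. - of_bool (k = int n + 1), 0) \<in> base_vanishing_above n"
      unfolding wreath_rep_conj_pow[of n, symmetric] by (rule subsetD[OF _ imageI, rotated])
    then show False
      unfolding base_vanishing_above_def by (auto dest: spec[of _ "int n + 1"])
  qed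
  ultimately show False
    using wreath.not_finitely_generated_if_ascending_union[OF subgroup_base_vanishing_above
        mono_base_vanishing_above wreath_rep_Q_2_Q_3]
    by blast
qed

theorem mainTheorem9:
  shows "infinite (rcosets\<^bsub>P3\<lparr>carrier := Q {2}\<rparr>\<^esub> (Q {2} \<inter> Q {3}))
       \<and> \<not> (\<exists>F. finite F \<and> F \<subseteq> Q {2} \<inter> Q {3} \<and> generate P3 F = Q {2} \<inter> Q {3})"
  using Q_2_Q_3_infinite_index Q_2_Q_3_not_finitely_generated by blast

end
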